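(* For $\sigma^2>0$ let $\Phi(\cdot;\sigma^2)$ denote the cumulative distribution function of $\mathcal{N}(0,\sigma^2)$. For every $\mu\ne0$ and $\nu^2,\sigma^2>0$, neither $\frac{\Phi(\mu;\sigma^2)}{\Phi(0;\nu^2)}$ nor $\frac{\Phi(0;\nu^2)}{\Phi(\mu;\sigma^2)}$ lies in the interval \[ \Big[1-\tfrac{1}{\sqrt{2\pi e}}\min\{1,|\mu|/\sigma\},\ 1+\tfrac{1}{\sqrt{2\pi e}}\min\{1,|\mu|/\sigma\}\Big]. \] *)

theory Defs
  imports "HOL-Probability.Probability"
begin

definition normal_cdf :: "real \<Rightarrow> real \<Rightarrow> real" where
  "normal_cdf x s2 = cdf (density lborel (normal_density 0 (sqrt s2))) x"

end

theory Submission
  imports Defs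
begin

(* Since Phi(0; nu^2) = 1/2, the two ratios are x and 1/x for x = 2 Phi(mu; sigma^2).
   On [-sigma, sigma] the density of N(0, sigma^2) is at least its value at sigma,
   1/(sigma sqrt(2 pi e)), so the mass between 0 and mu is at least
   min(|mu|, sigma)/(sigma sqrt(2 pi e)) = c, i.e. |x - 1| >= 2c.
   Because 2 pi e > 4 we have c < 1/2, and then neither x nor 1/x lies in [1 - c, 1 + c]. *)

lemma measure_density_eq_set_integral:
  fixes f :: "'a \<Rightarrow> real"
  assumes f: "integrable M f" "\<And>x. 0 \<le> f x" and A: "A \<in> sets M"
  shows "measure (density M f) A = (LINT x:A|M. f x)"
proof -
  have int: "integrable M (\<lambda>x. f x * indicator A x)"
    using f A by (intro integrable_real_mult_indicator) auto
  have "emeasure (density M f) A = (\<integral>\<^sup>+ x. f x * indicator A x \<partial>M)"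
    using f A by (subst emeasure_density) (auto intro!: nn_integral_cong split: split_indicator)
  also have "\<dots> = ennreal (LINT x|M. f x * indicator A x)"
    using int f by (intro nn_integral_eq_integral) auto
  finally show ?thesis
    using f by (simp add: measure_def set_lebesgue_integral_def mult.commute integral_nonneg)
qed

lemma cdf_zero_even_density:
  fixes f :: "real \<Rightarrow> real"
  assumes f: "integrable lborel f" "\<And>x. 0 \<le> f x" and even: "\<And>x. f (- x) = f x"
  shows "cdf (density lborel f) 0 = (LINT x|lborel. f x) / 2"
proof -
  have si: "set_integrable lborel A f" if "A \<in> sets borel" for A
    using f that unfolding set_integrable_def by (intro integrable_mult_indicator) auto
  have "(LBINT x:{..0}. f x) = (LBINT x:{0..}. f x)"
    by (subst set_integral_reflect) (simp add: even atLeast_def)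
  also have "\<dots> = (LBINT x:{0<..}. f x)"
  proof (intro set_integral_null_delta)
    have "{0::real..} - {0<..} \<union> ({0<..} - {0..}) = {0}" by auto
    then show "{0::real..} - {0<..} \<union> ({0<..} - {0..}) \<in> null_sets lborel"
      by (simp add: null_sets_def)
  qed (use f in auto)
  finally have reflect: "(LBINT x:{..0}. f x) = (LBINT x:{0<..}. f x)" .
  have "(LINT x|lborel. f x) = (LBINT x:{..0} \<union> {0<..}. f x)"
  proof -
    have "{..0} \<union> {0<..} = (UNIV :: real set)" by auto
    then show ?thesis using set_integral_space[OF f(1)] by simp
  qed
  also have "\<dots> = (LBINT x:{..0}. f x) + (LBINT x:{0<..}. f x)"
    by (intro set_integral_Un si) auto
  finally show ?thesis
    using reflect f by (simp add: cdf_def measure_density_eq_set_integral)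
qed

lemma measure_density_Ioc_lower_bound:
  fixes f :: "real \<Rightarrow> real"
  assumes f: "integrable lborel f" "\<And>x. 0 \<le> f x" and "p \<le> q"
    and lower: "\<And>x. x \<in> {p<..q} \<Longrightarrow> m \<le> f x"
  shows "(q - p) * m \<le> measure (density lborel f) {p<..q}"
proof -
  have "(q - p) * m = (LBINT x:{p<..q}. m)"
    using \<open>p \<le> q\<close> by (subst set_integral_const) auto
  also have "\<dots> \<le> (LBINT x:{p<..q}. f x)"
  proof (rule set_integral_mono)
    show "set_integrable lborel {p<..q} (\<lambda>x. m)"
      using \<open>p \<le> q\<close> unfolding set_integrable_def
      by (intro integrable_scaleR_left integrable_real_indicator) auto
    show "set_integrable lborel {p<..q} f"
      using f unfolding set_integrable_def by (intro integrable_mult_indicator) auto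
  qed (rule lower)
  finally show ?thesis
    using f by (simp add: measure_density_eq_set_integral)
qed

lemma normal_density_antimono:
  assumes "\<bar>x - \<mu>\<bar> \<le> \<bar>y - \<mu>\<bar>"
  shows "normal_density \<mu> \<sigma> y \<le> normal_density \<mu> \<sigma> x"
proof -
  have "(x - \<mu>)\<^sup>2 \<le> (y - \<mu>)\<^sup>2"
    using assms by (simp add: abs_le_square_iff)
  then show ?thesis
    unfolding normal_density_def by (intro mult_left_mono) (auto simp: divide_right_mono)
qed

lemma normal_density_at_sigma:
  assumes "\<sigma> > 0"
  shows "normal_density \<mu> \<sigma> (\<mu> + \<sigma>) = 1 / (\<sigma> * sqrt (2 * pi * exp 1))"
proof -
  have "exp 1 = (exp (1/2) :: real)\<^sup>2"
    by (simp add: power2_eq_square exp_add[symmetric])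
  then have "sqrt (exp 1) = exp (1/2 :: real)"
    by simp
  moreover have "exp (- 1/2 :: real) = 1 / exp (1/2)"
    by (simp add: exp_minus field_simps)
  ultimately show ?thesis
    using assms by (simp add: normal_density_def real_sqrt_mult power2_eq_square)
qed

lemma normal_cdf_zero:
  assumes "s2 > 0"
  shows "normal_cdf 0 s2 = 1/2"
  unfolding normal_cdf_def using assms
  by (subst cdf_zero_even_density) (auto simp: normal_density_def)

lemma normal_cdf_dist_half_lower_bound:
  assumes "s2 > 0"
  shows "min 1 (\<bar>x\<bar> / sqrt s2) / sqrt (2 * pi * exp 1) \<le> \<bar>normal_cdf x s2 - 1/2\<bar>"
proof -
  define s where "s = sqrt s2"
  have s: "s > 0"
    using assms by (simp add: s_def)
  let ?M = "density lborel (normal_density 0 s)"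
  interpret real_distribution ?M
    by (intro real_distribution.intro real_distribution_axioms.intro prob_space_normal_density s) auto
  have cdf: "normal_cdf y s2 = cdf ?M y" for y
    by (simp add: normal_cdf_def s_def)
  have mass: "(q - p) * normal_density 0 s s \<le> measure ?M {p<..q}"
    if "p \<le> q" "-s \<le> p" "q \<le> s" for p q
    using that s
    by (intro measure_density_Ioc_lower_bound normal_density_antimono integrable_normal_density) auto
  define l where "l = min \<bar>x\<bar> s"
  have "min 1 (\<bar>x\<bar> / sqrt s2) / sqrt (2 * pi * exp 1) = l * normal_density 0 s s"
    using normal_density_at_sigma[OF s, of 0] s
    by (simp add: l_def s_def[symmetric] min_def field_simps)
  also have "\<dots> \<le> \<bar>cdf ?M x - cdf ?M 0\<bar>"
  proof (cases x "0 :: real" rule: linorder_cases)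
    case less
    have "l * normal_density 0 s s \<le> measure ?M {-l<..0}"
      using mass[of "-l" 0] s by (simp add: l_def)
    also have "\<dots> \<le> measure ?M {x<..0}"
      using less by (intro finite_measure_mono) (auto simp: l_def)
    also have "\<dots> = cdf ?M 0 - cdf ?M x"
      using less by (simp add: cdf_diff_eq)
    finally show ?thesis by simp
  next
    case equal
    then show ?thesis using s by (simp add: l_def)
  next
    case greater
    have "l * normal_density 0 s s \<le> measure ?M {0<..l}"
      using mass[of 0 l] s by (simp add: l_def)
    also have "\<dots> \<le> measure ?M {0<..x}"
      using greater by (intro finite_measure_mono) (auto simp: l_def)
    also have "\<dots> = cdf ?M x - cdf ?M 0"
      using greater by (simp add: cdf_diff_eq)
    finally show ?thesis by simp
  qed
  finally show ?thesis
    using normal_cdf_zero[OF assms] by (simp add: cdf)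
qed

lemma sqrt_2_pi_e_gt_2: "2 < sqrt (2 * pi * exp 1)"
proof -
  have "3 * 1 < pi * exp 1"
    using pi_gt3 exp_gt_one[of 1] by (intro mult_strict_mono) auto
  then have "sqrt 4 < sqrt (2 * pi * exp 1)"
    by (intro real_sqrt_less_mono) simp
  then show ?thesis
    by simp
qed

lemma not_near_one_nor_inverse:
  fixes x c :: real
  assumes c: "0 < c" "c < 1/2" and x: "2 * c \<le> \<bar>x - 1\<bar>"
  shows "x \<notin> {1 - c .. 1 + c} \<and> inverse x \<notin> {1 - c .. 1 + c}"
proof (cases "x > 1")
  case True
  then have "1 + 2 * c \<le> x" using x by simp
  have "1 < (1 - c) * (1 + 2 * c)"
    using mult_pos_pos[of c "1 - 2 * c"] c by (simp add: algebra_simps)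
  also have "\<dots> \<le> (1 - c) * x"
    using \<open>1 + 2 * c \<le> x\<close> c by (intro mult_left_mono) auto
  finally have "inverse x < 1 - c"
    using True by (simp add: field_simps)
  with \<open>1 + 2 * c \<le> x\<close> c show ?thesis by auto
next
  case False
  then have "x \<le> 1 - 2 * c" using x by simp
  moreover have "inverse x \<notin> {1 - c .. 1 + c}"
  proof (cases "x > 0")
    case True
    have "(1 + c) * x \<le> (1 + c) * (1 - 2 * c)"
      using \<open>x \<le> 1 - 2 * c\<close> c by (intro mult_left_mono) auto
    also have "\<dots> < 1"
      using mult_pos_pos[of c "1 + 2 * c"] c by (simp add: algebra_simps)
    finally have "1 + c < inverse x"
      using True by (simp add: field_simps)
    then show ?thesis by simp
  next
    case False
    then have "inverse x \<le> 0" by simp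
    then have "inverse x < 1 - c" using c by linarith
    then show ?thesis by simp
  qed
  ultimately show ?thesis using c by auto
qed

theorem lemmaB2:
  fixes \<mu> \<nu>2 \<sigma>2 :: real
  assumes "\<mu> \<noteq> 0" and "\<nu>2 > 0" and "\<sigma>2 > 0"
  defines "c \<equiv> 1 / sqrt (2 * pi * exp 1) * min 1 (\<bar>\<mu>\<bar> / sqrt \<sigma>2)"
  shows "normal_cdf \<mu> \<sigma>2 / normal_cdf 0 \<nu>2 \<notin> {1 - c .. 1 + c}
       \<and> normal_cdf 0 \<nu>2 / normal_cdf \<mu> \<sigma>2 \<notin> {1 - c .. 1 + c}"
proof -
  have "1 / sqrt (2 * pi * exp 1) < 1/2"
    using sqrt_2_pi_e_gt_2 by (simp add: field_simps)
  moreover have "c \<le> 1 / sqrt (2 * pi * exp 1)"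
    unfolding c_def by (intro mult_left_le) auto
  ultimately have "c < 1/2"
    by linarith
  have "0 < c"
    using assms by (simp add: c_def)
  have "2 * c \<le> \<bar>2 * normal_cdf \<mu> \<sigma>2 - 1\<bar>"
    using normal_cdf_dist_half_lower_bound[OF \<open>\<sigma>2 > 0\<close>, of \<mu>] by (simp add: c_def)
  moreover have "normal_cdf \<mu> \<sigma>2 / normal_cdf 0 \<nu>2 = 2 * normal_cdf \<mu> \<sigma>2"
    and "normal_cdf 0 \<nu>2 / normal_cdf \<mu> \<sigma>2 = inverse (2 * normal_cdf \<mu> \<sigma>2)"
    unfolding normal_cdf_zero[OF \<open>\<nu>2 > 0\<close>] by (simp_all add: inverse_eq_divide)
  ultimately show ?thesis
    using not_near_one_nor_inverse[OF \<open>0 < c\<close> \<open>c < 1/2\<close>] by presburger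
qed

end
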